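(* Let $k,s$ be positive integers and suppose that $K_{k+1,s}$ admits a balanced $k$-page embedding. Let $n\ge s$ be an integer and $q:=n\bmod s$. Then \[ \nu_k(K_{k+1,n}) \le q\binom{\frac{n-q}{s}+1}{2} + (s-q)\binom{\frac{n-q}{s}}{2}. \]
   Context: A book with $k$ pages consists of a line (the spine) and $k$ half-planes (the pages) whose common boundary is the spine. A $k$-page drawing of a graph places all vertices on the spine and draws each edge inside a single page; a $k$-page embedding is one without crossings. $\nu_k(G)$ is the minimum number of crossings over all $k$-page drawings of $G$. In $K_{k+1,s}$, call the $k+1$ vertices of degree $s$ black and the $s$ vertices of degree $k+1$ white. In a $k$-page embedding, the load of a white vertex $v$ in a page is the number of edges incident with $v$ drawn in that page. A $k$-page embedding of $K_{k+1,s}$ is balanced if every white vertex has load exactly $1$ in $k-1$ of the pages (hence load $2$ in the remaining page). Convention: $\binom{a}{b}=0$ whenever $a<b$. *)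

theory Defs
  imports Main
begin

text \<open>Complete bipartite graph K_{m,s}: black vertices Inl i (i < m), white vertices
  Inr j (j < s), edges (i,j) joining Inl i and Inr j.
  A k-page drawing is given by an injective placement of the vertices on the spine
  (positions in nat, only the order matters) and a page assignment of the edges.
  Two edges in the same page cross iff their endpoints strictly interleave along the spine.\<close>

definition kb_vertices :: "nat \<Rightarrow> nat \<Rightarrow> (nat + nat) set" where
  "kb_vertices m s = Inl ` {..<m} \<union> Inr ` {..<s}"

definition book_drawing :: "nat \<Rightarrow> nat \<Rightarrow> nat \<Rightarrow> (nat + nat \<Rightarrow> nat) \<Rightarrow> (nat \<Rightarrow> nat \<Rightarrow> nat) \<Rightarrow> bool" where
  "book_drawing k m s pos pg \<longleftrightarrow>
     inj_on pos (kb_vertices m s) \<and> (\<forall>i<m. \<forall>j<s. pg i j < k)"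

definition edge_lo :: "(nat + nat \<Rightarrow> nat) \<Rightarrow> nat \<times> nat \<Rightarrow> nat" where
  "edge_lo pos e = min (pos (Inl (fst e))) (pos (Inr (snd e)))"

definition edge_hi :: "(nat + nat \<Rightarrow> nat) \<Rightarrow> nat \<times> nat \<Rightarrow> nat" where
  "edge_hi pos e = max (pos (Inl (fst e))) (pos (Inr (snd e)))"

text \<open>Each crossing pair {e,f} is counted once, as the ordered pair with lo e < lo f.\<close>
definition crossings :: "nat \<Rightarrow> nat \<Rightarrow> (nat + nat \<Rightarrow> nat) \<Rightarrow> (nat \<Rightarrow> nat \<Rightarrow> nat) \<Rightarrow> nat" where
  "crossings m s pos pg = card {(e, f). e \<in> {..<m} \<times> {..<s} \<and> f \<in> {..<m} \<times> {..<s} \<and>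
      pg (fst e) (snd e) = pg (fst f) (snd f) \<and>
      edge_lo pos e < edge_lo pos f \<and> edge_lo pos f < edge_hi pos e \<and> edge_hi pos e < edge_hi pos f}"

definition book_embedding :: "nat \<Rightarrow> nat \<Rightarrow> nat \<Rightarrow> (nat + nat \<Rightarrow> nat) \<Rightarrow> (nat \<Rightarrow> nat \<Rightarrow> nat) \<Rightarrow> bool" where
  "book_embedding k m s pos pg \<longleftrightarrow> book_drawing k m s pos pg \<and> crossings m s pos pg = 0"

definition book_cr :: "nat \<Rightarrow> nat \<Rightarrow> nat \<Rightarrow> nat" where
  "book_cr k m s = (LEAST c. \<exists>pos pg. book_drawing k m s pos pg \<and> crossings m s pos pg = c)"

definition load :: "nat \<Rightarrow> (nat \<Rightarrow> nat \<Rightarrow> nat) \<Rightarrow> nat \<Rightarrow> nat \<Rightarrow> nat" where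
  "load m pg j p = card {i. i < m \<and> pg i j = p}"

definition balanced_embedding :: "nat \<Rightarrow> nat \<Rightarrow> (nat + nat \<Rightarrow> nat) \<Rightarrow> (nat \<Rightarrow> nat \<Rightarrow> nat) \<Rightarrow> bool" where
  "balanced_embedding k s pos pg \<longleftrightarrow> book_embedding k (k+1) s pos pg \<and>
     (\<forall>j<s. card {p. p < k \<and> load (k+1) pg j p = 1} = k - 1)"

end

theory Submission
  imports Defs
begin

text \<open>Take a balanced k-page embedding of \<open>K\<^sub>k\<^sub>+\<^sub>1\<^sub>,\<^sub>s\<close> and replace each white vertex u
  by a cluster of copies placed consecutively right next to u, the white vertex j of
  \<open>K\<^sub>k\<^sub>+\<^sub>1\<^sub>,\<^sub>n\<close> being a copy of \<open>u = j mod s\<close>; every edge is drawn in the page of the edge it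
  copies. Edges at different clusters cross only if their originals did, so every crossing
  is formed by two copies of the same u together with two black vertices joined to u in a
  common page. Balance means there is exactly one such pair of black vertices, so each pair
  of copies contributes at most one crossing. There are \<open>n mod s\<close> clusters of size
  \<open>\<lceil>n/s\<rceil>\<close> and \<open>s - n mod s\<close> of size \<open>\<lfloor>n/s\<rfloor>\<close>.\<close>

definition interleave :: "'a::linorder \<Rightarrow> 'a \<Rightarrow> 'a \<Rightarrow> 'a \<Rightarrow> bool" where
  "interleave a b c d \<longleftrightarrow> min a b < min c d \<and> min c d < max a b \<and> max a b < max c d"

lemma interleave_distinct: "interleave a b c d \<Longrightarrow> a \<noteq> c \<and> a \<noteq> d \<and> b \<noteq> c \<and> b \<noteq> d"
  unfolding interleave_def by (auto simp: min_def max_def split: if_splits)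

lemma interleave_unique:
  assumes "interleave a b c d" "interleave a' b' c' d'" "{a', c'} = {a, c}" "{b', d'} = {b, d}"
  shows "a' = a \<and> b' = b \<and> c' = c \<and> d' = d"
  using assms unfolding interleave_def doubleton_eq_iff by (auto simp: min_def max_def split: if_splits)

lemma interleave_mono:
  fixes f :: "'a::linorder \<Rightarrow> 'b::linorder"
  assumes "mono f" "interleave a b c d" "distinct [f a, f b, f c, f d]"
  shows "interleave (f a) (f b) (f c) (f d)"
proof -
  have "min a b < min c d" "min c d < max a b" "max a b < max c d"
    using assms(2) unfolding interleave_def by auto
  then have "f (min a b) \<le> f (min c d)" "f (min c d) \<le> f (max a b)" "f (max a b) \<le> f (max c d)"
    using monoD[OF assms(1)] less_imp_le by blast+
  then have "min (f a) (f b) \<le> min (f c) (f d)" "min (f c) (f d) \<le> max (f a) (f b)"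
    "max (f a) (f b) \<le> max (f c) (f d)"
    unfolding min_of_mono[OF assms(1)] max_of_mono[OF assms(1)] .
  with assms(3) show ?thesis unfolding interleave_def by (auto simp: min_def max_def)
qed

lemma sum_load:
  assumes "\<forall>i<m. pg i j < k"
  shows "(\<Sum>p<k. load m pg j p) = m"
proof -
  have "(\<Sum>p<k. \<Sum>i\<in>{i \<in> {..<m}. pg i j = p}. 1) = (\<Sum>i<m. 1::nat)"
    by (rule sum.group) (use assms in auto)
  then show ?thesis by (simp add: load_def)
qed

lemma balanced_heavy_load:
  assumes pages: "\<forall>i<k+1. pg i j < k"
    and balanced: "card {p. p < k \<and> load (k+1) pg j p = 1} = k - 1"
  shows "(\<Sum>p\<in>{..<k} - {p. p < k \<and> load (k+1) pg j p = 1}. load (k+1) pg j p) = 2"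
proof -
  let ?L = "{p. p < k \<and> load (k+1) pg j p = 1}"
  have "k > 0"
    using pages[rule_format, of 0] by simp
  have "(\<Sum>p\<in>?L. load (k+1) pg j p) = k - 1"
    using balanced by simp
  moreover have "(\<Sum>p<k. load (k+1) pg j p) =
      (\<Sum>p\<in>{..<k} - ?L. load (k+1) pg j p) + (\<Sum>p\<in>?L. load (k+1) pg j p)"
    by (rule sum.subset_diff) auto
  ultimately show ?thesis
    using sum_load[of "k+1" pg j k, OF pages] \<open>k > 0\<close> by linarith
qed

lemma balanced_same_page_pair:
  assumes pages: "\<forall>i<k+1. pg i j < k"
    and balanced: "card {p. p < k \<and> load (k+1) pg j p = 1} = k - 1"
    and "i1 \<noteq> i2" "i1 < k+1" "i2 < k+1" "pg i1 j = pg i2 j"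
    and "i1' \<noteq> i2'" "i1' < k+1" "i2' < k+1" "pg i1' j = pg i2' j"
  shows "{i1', i2'} = {i1, i2}"
proof -
  define A where "A p = {i. i < k+1 \<and> pg i j = p}" for p
  define H where "H = {..<k} - {p. p < k \<and> load (k+1) pg j p = 1}"
  have card_A: "card (A p) = load (k+1) pg j p" for p
    by (simp add: load_def A_def)
  have finite_A: "finite (A p)" for p
    by (simp add: A_def)
  have heavy: "(\<Sum>p\<in>H. card (A p)) = 2"
    unfolding card_A H_def by (rule balanced_heavy_load[OF pages balanced])
  have pairs: "{i1, i2} \<subseteq> A (pg i1 j)" "{i1', i2'} \<subseteq> A (pg i1' j)"
    using assms unfolding A_def by auto
  have two: "card {i1, i2} = 2" "card {i1', i2'} = 2"
    using assms by simp_all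
  have ge2: "card (A (pg i1 j)) \<ge> 2" "card (A (pg i1' j)) \<ge> 2"
    using card_mono[OF finite_A pairs(1)] card_mono[OF finite_A pairs(2)] two by simp_all
  have "pg i1 j < k" "pg i1' j < k"
    using pages assms by blast+
  then have in_H: "pg i1 j \<in> H" "pg i1' j \<in> H"
    using ge2 unfolding H_def card_A by auto
  have same_page: "pg i1' j = pg i1 j"
  proof (rule ccontr)
    assume "pg i1' j \<noteq> pg i1 j"
    then have "card (A (pg i1 j)) + card (A (pg i1' j)) \<le> (\<Sum>p\<in>H. card (A p))"
      using sum_mono2[of H "{pg i1 j, pg i1' j}" "\<lambda>p. card (A p)"] in_H by (simp add: H_def)
    with heavy ge2 show False by linarith
  qed
  have "card (A (pg i1 j)) \<le> 2"
    using member_le_sum[of "pg i1 j" H "\<lambda>p. card (A p)"] in_H heavy by (simp add: H_def)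
  then have "{i1, i2} = A (pg i1 j)" "{i1', i2'} = A (pg i1 j)"
    using card_seteq[OF finite_A pairs(1)] card_seteq[OF finite_A pairs(2)]
    unfolding same_page two by simp_all
  then show ?thesis by simp
qed

definition crossing_pairs :: "nat \<Rightarrow> nat \<Rightarrow> (nat + nat \<Rightarrow> nat) \<Rightarrow> (nat \<Rightarrow> nat \<Rightarrow> nat) \<Rightarrow> ((nat \<times> nat) \<times> (nat \<times> nat)) set" where
  "crossing_pairs m s pos pg = {(e, f). e \<in> {..<m} \<times> {..<s} \<and> f \<in> {..<m} \<times> {..<s} \<and>
      pg (fst e) (snd e) = pg (fst f) (snd f) \<and>
      edge_lo pos e < edge_lo pos f \<and> edge_lo pos f < edge_hi pos e \<and> edge_hi pos e < edge_hi pos f}"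

lemma crossings_eq_card_crossing_pairs: "crossings m s pos pg = card (crossing_pairs m s pos pg)"
  unfolding crossings_def crossing_pairs_def ..

lemma mem_crossing_pairs:
  "((i1, j1), (i2, j2)) \<in> crossing_pairs m s pos pg \<longleftrightarrow>
     i1 < m \<and> j1 < s \<and> i2 < m \<and> j2 < s \<and> pg i1 j1 = pg i2 j2 \<and>
     interleave (pos (Inl i1)) (pos (Inr j1)) (pos (Inl i2)) (pos (Inr j2))"
  by (simp add: crossing_pairs_def edge_lo_def edge_hi_def interleave_def)

lemma crossing_pairs_empty:
  assumes "book_embedding k m s pos pg"
  shows "crossing_pairs m s pos pg = {}"
proof -
  have "crossing_pairs m s pos pg \<subseteq> ({..<m} \<times> {..<s}) \<times> ({..<m} \<times> {..<s})"
    unfolding crossing_pairs_def by auto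
  then have "finite (crossing_pairs m s pos pg)"
    by (rule finite_subset) auto
  with assms show ?thesis
    by (simp add: book_embedding_def crossings_eq_card_crossing_pairs)
qed

text \<open>Each spine position x becomes the block \<open>Suc n * x + {0..n}\<close>: a black vertex stays at
  the start of its block, and white vertex j sits at offset \<open>Suc j\<close> in the block of \<open>j mod s\<close>.\<close>

definition blowup_pos :: "nat \<Rightarrow> nat \<Rightarrow> (nat + nat \<Rightarrow> nat) \<Rightarrow> nat + nat \<Rightarrow> nat" where
  "blowup_pos n s pos v = Suc n * pos (map_sum id (\<lambda>j. j mod s) v) + case_sum (\<lambda>_. 0) Suc v"

lemma blowup_pos_div_mod:
  assumes "v \<in> kb_vertices m n"
  shows "blowup_pos n s pos v div Suc n = pos (map_sum id (\<lambda>j. j mod s) v)"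
    and "blowup_pos n s pos v mod Suc n = case_sum (\<lambda>_. 0) Suc v"
proof -
  have "case_sum (\<lambda>_. 0) Suc v < Suc n"
    using assms by (auto simp: kb_vertices_def)
  then show "blowup_pos n s pos v div Suc n = pos (map_sum id (\<lambda>j. j mod s) v)"
    and "blowup_pos n s pos v mod Suc n = case_sum (\<lambda>_. 0) Suc v"
    by (simp_all add: blowup_pos_def del: mult_Suc)
qed

lemma collapse_kb_vertices:
  "0 < s \<Longrightarrow> v \<in> kb_vertices m n \<Longrightarrow> map_sum id (\<lambda>j. j mod s) v \<in> kb_vertices m s"
  by (auto simp: kb_vertices_def)

lemma book_drawing_blowup:
  assumes "book_drawing k m s pos pg" "0 < s"
  shows "book_drawing k m n (blowup_pos n s pos) (\<lambda>i j. pg i (j mod s))"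
  unfolding book_drawing_def
proof
  have inj: "inj_on pos (kb_vertices m s)" and pages: "\<forall>i<m. \<forall>j<s. pg i j < k"
    using assms(1) by (simp_all add: book_drawing_def)
  show "inj_on (blowup_pos n s pos) (kb_vertices m n)"
  proof (rule inj_onI)
    fix v w assume v: "v \<in> kb_vertices m n" and w: "w \<in> kb_vertices m n"
      and eq: "blowup_pos n s pos v = blowup_pos n s pos w"
    have "pos (map_sum id (\<lambda>j. j mod s) v) = pos (map_sum id (\<lambda>j. j mod s) w)"
      using blowup_pos_div_mod(1)[OF v] blowup_pos_div_mod(1)[OF w] eq by metis
    then have "map_sum id (\<lambda>j. j mod s) v = map_sum id (\<lambda>j. j mod s) w"
      using inj_onD[OF inj] collapse_kb_vertices[OF assms(2)] v w by blast
    moreover have "case_sum (\<lambda>_. 0) Suc v = case_sum (\<lambda>_. 0) Suc w"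
      using blowup_pos_div_mod(2)[OF v] blowup_pos_div_mod(2)[OF w] eq by metis
    ultimately show "v = w"
      by (cases v; cases w) auto
  qed
  show "\<forall>i<m. \<forall>j<n. pg i (j mod s) < k"
    using pages assms(2) by simp
qed

lemma blowup_crossing_copies:
  assumes emb: "book_embedding k m s pos pg" and "0 < s"
    and cross: "((i1, j1), (i2, j2)) \<in> crossing_pairs m n (blowup_pos n s pos) (\<lambda>i j. pg i (j mod s))"
  shows "i1 \<noteq> i2" "j1 \<noteq> j2" "j1 mod s = j2 mod s"
proof -
  let ?P = "blowup_pos n s pos"
  have idx: "i1 < m" "j1 < n" "i2 < m" "j2 < n" and same_page: "pg i1 (j1 mod s) = pg i2 (j2 mod s)"
    and new: "interleave (?P (Inl i1)) (?P (Inr j1)) (?P (Inl i2)) (?P (Inr j2))"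
    using cross by (simp_all add: mem_crossing_pairs)
  show "i1 \<noteq> i2" "j1 \<noteq> j2"
    using interleave_distinct[OF new] by auto
  show "j1 mod s = j2 mod s"
  proof (rule ccontr)
    assume residues: "j1 mod s \<noteq> j2 mod s"
    have V: "Inl i1 \<in> kb_vertices m n" "Inr j1 \<in> kb_vertices m n"
      "Inl i2 \<in> kb_vertices m n" "Inr j2 \<in> kb_vertices m n"
      using idx by (auto simp: kb_vertices_def)
    have "inj_on pos (kb_vertices m s)"
      using emb by (simp add: book_embedding_def book_drawing_def)
    then have "distinct [pos (Inl i1), pos (Inr (j1 mod s)), pos (Inl i2), pos (Inr (j2 mod s))]"
      using residues idx \<open>i1 \<noteq> i2\<close> \<open>0 < s\<close> by (auto simp: inj_on_eq_iff kb_vertices_def)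
    txt \<open>Dividing by \<open>Suc n\<close> collapses the blocks and maps the crossing to one of the embedding.\<close>
    then have "interleave (pos (Inl i1)) (pos (Inr (j1 mod s))) (pos (Inl i2)) (pos (Inr (j2 mod s)))"
      using interleave_mono[OF _ new, of "\<lambda>x. x div Suc n"] blowup_pos_div_mod(1)[OF V(1)]
        blowup_pos_div_mod(1)[OF V(2)] blowup_pos_div_mod(1)[OF V(3)] blowup_pos_div_mod(1)[OF V(4)]
      by (simp add: mono_def div_le_mono)
    then have "((i1, j1 mod s), (i2, j2 mod s)) \<in> crossing_pairs m s pos pg"
      using idx same_page \<open>0 < s\<close> by (simp add: mem_crossing_pairs)
    then show False
      using crossing_pairs_empty[OF emb] by simp
  qed
qed

definition same_residue_pairs :: "nat \<Rightarrow> nat \<Rightarrow> (nat \<times> nat) set" where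
  "same_residue_pairs s n = {(a, b). a < b \<and> b < n \<and> a mod s = b mod s}"

lemma card_same_residue_below:
  fixes s b :: nat
  assumes "0 < s"
  shows "card {a. a < b \<and> a mod s = b mod s} = b div s"
proof -
  have "{a. a < b \<and> a mod s = b mod s} = (\<lambda>t. b mod s + s * t) ` {..<b div s}"
  proof (intro set_eqI iffI)
    fix a assume "a \<in> {a. a < b \<and> a mod s = b mod s}"
    then have "a < b" and a_eq: "a = b mod s + s * (a div s)"
      by (auto, metis mod_mult_div_eq add.commute)
    then have "s * (a div s) < s * (b div s)"
      by (metis add_less_cancel_left mod_mult_div_eq add.commute)
    then show "a \<in> (\<lambda>t. b mod s + s * t) ` {..<b div s}"
      using a_eq by auto
  next
    fix a assume "a \<in> (\<lambda>t. b mod s + s * t) ` {..<b div s}"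
    then obtain t where "t < b div s" and a: "a = b mod s + s * t"
      by auto
    then have "s * t < s * (b div s)"
      using assms by simp
    then have "a < b"
      unfolding a by (metis add_less_cancel_left mod_mult_div_eq add.commute)
    then show "a \<in> {a. a < b \<and> a mod s = b mod s}"
      unfolding a by simp
  qed
  moreover have "inj_on (\<lambda>t. b mod s + s * t) {..<b div s}"
    using assms by (auto simp: inj_on_def)
  ultimately show ?thesis
    by (simp add: card_image)
qed

lemma card_same_residue_pairs_sum:
  assumes "0 < s"
  shows "card (same_residue_pairs s n) = (\<Sum>b<n. b div s)"
proof (induction n)
  case 0
  then show ?case by (simp add: same_residue_pairs_def)
next
  case (Suc n)
  let ?new = "(\<lambda>a. (a, n)) ` {a. a < n \<and> a mod s = n mod s}"
  have "same_residue_pairs s (Suc n) = same_residue_pairs s n \<union> ?new"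
    unfolding same_residue_pairs_def by (auto simp: less_Suc_eq)
  moreover have "finite (same_residue_pairs s n)"
    by (rule finite_subset[of _ "{..<n} \<times> {..<n}"]) (auto simp: same_residue_pairs_def)
  moreover have "same_residue_pairs s n \<inter> ?new = {}"
    unfolding same_residue_pairs_def by auto
  moreover have "card ?new = n div s"
    using card_same_residue_below[OF assms] by (simp add: card_image inj_on_def)
  ultimately show ?case
    using Suc by (simp add: card_Un_disjoint)
qed

lemma sum_div_add_below:
  fixes s :: nat
  shows "q \<le> s \<Longrightarrow> (\<Sum>b<s * a + q. b div s) = (\<Sum>b<s * a. b div s) + q * a"
proof (induction q)
  case (Suc q)
  then have "(s * a + q) div s = a" by auto
  with Suc show ?case by simp
qed simp

lemma sum_div_mult:
  fixes s :: nat
  assumes "0 < s"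
  shows "(\<Sum>b<s * a. b div s) = s * (a choose 2)"
proof (induction a)
  case (Suc a)
  have "(\<Sum>b<s * Suc a. b div s) = (\<Sum>b<s * a + s. b div s)"
    by (simp add: algebra_simps)
  also have "\<dots> = s * (a choose 2) + s * a"
    using sum_div_add_below[of s s a] Suc by simp
  also have "\<dots> = s * (Suc a choose 2)"
    by (simp add: numeral_2_eq_2 algebra_simps)
  finally show ?case .
qed simp

lemma card_same_residue_pairs:
  fixes s n :: nat
  assumes "0 < s"
  shows "card (same_residue_pairs s n) =
    (n mod s) * (((n - n mod s) div s + 1) choose 2) + (s - n mod s) * (((n - n mod s) div s) choose 2)"
proof -
  let ?a = "n div s" and ?q = "n mod s"
  have "card (same_residue_pairs s n) = (\<Sum>b<s * ?a + ?q. b div s)"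
    using card_same_residue_pairs_sum[OF assms] by simp
  also have "\<dots> = s * (?a choose 2) + ?q * ?a"
    using sum_div_add_below[of ?q s ?a] sum_div_mult[OF assms] assms by simp
  also have "\<dots> = ?q * ((?a choose 2) + ?a) + (s - ?q) * (?a choose 2)"
  proof -
    have "?q \<le> s"
      using assms by (simp add: less_imp_le)
    then have "s * (?a choose 2) = ?q * (?a choose 2) + (s - ?q) * (?a choose 2)"
      by (simp add: add_mult_distrib[symmetric])
    then show ?thesis
      by (simp add: algebra_simps)
  qed
  also have "\<dots> = ?q * ((?a + 1) choose 2) + (s - ?q) * (?a choose 2)"
    by (simp add: numeral_2_eq_2)
  finally show ?thesis
    by (simp add: minus_mod_eq_mult_div)
qed

lemma balanced_blowup_crossing_unique:
  assumes bal: "balanced_embedding k s pos pg" and "0 < s"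
    and x: "((i1, j1), (i2, j2)) \<in> crossing_pairs (k+1) n (blowup_pos n s pos) (\<lambda>i j. pg i (j mod s))"
    and y: "((i1', j1'), (i2', j2')) \<in> crossing_pairs (k+1) n (blowup_pos n s pos) (\<lambda>i j. pg i (j mod s))"
    and whites: "{j1', j2'} = {j1, j2}"
  shows "i1' = i1 \<and> j1' = j1 \<and> i2' = i2 \<and> j2' = j2"
proof -
  let ?P = "blowup_pos n s pos"
  have emb: "book_embedding k (k+1) s pos pg"
    and balanced: "\<forall>j<s. card {p. p < k \<and> load (k+1) pg j p = 1} = k - 1"
    using bal by (simp_all add: balanced_embedding_def)
  have pages: "\<forall>i<k+1. \<forall>j<s. pg i j < k"
    using emb by (simp add: book_embedding_def book_drawing_def)
  have "book_drawing k (k+1) n ?P (\<lambda>i j. pg i (j mod s))"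
    using emb book_drawing_blowup[OF _ \<open>0 < s\<close>] by (simp add: book_embedding_def)
  then have inj: "inj_on ?P (kb_vertices (k+1) n)"
    by (simp add: book_drawing_def)
  have cx: "i1 < k+1" "i2 < k+1" "j1 < n" "j2 < n" "pg i1 (j1 mod s) = pg i2 (j2 mod s)"
    and ix: "interleave (?P (Inl i1)) (?P (Inr j1)) (?P (Inl i2)) (?P (Inr j2))"
    using x by (simp_all add: mem_crossing_pairs)
  have cy: "i1' < k+1" "i2' < k+1" "j1' < n" "j2' < n" "pg i1' (j1' mod s) = pg i2' (j2' mod s)"
    and iy: "interleave (?P (Inl i1')) (?P (Inr j1')) (?P (Inl i2')) (?P (Inr j2'))"
    using y by (simp_all add: mem_crossing_pairs)
  note copies_x = blowup_crossing_copies[OF emb \<open>0 < s\<close> x]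
  note copies_y = blowup_crossing_copies[OF emb \<open>0 < s\<close> y]
  have residue: "j1' mod s = j1 mod s" "j2 mod s = j1 mod s" "j2' mod s = j1 mod s"
    using whites copies_x copies_y by (auto simp: doubleton_eq_iff)
  have "j1 mod s < s"
    using \<open>0 < s\<close> by simp
  then have blacks: "{i1', i2'} = {i1, i2}"
    using balanced_same_page_pair[of k pg "j1 mod s" i1 i2 i1' i2'] pages balanced
      cx cy copies_x copies_y residue by metis
  have "{?P (Inl i1'), ?P (Inl i2')} = {?P (Inl i1), ?P (Inl i2)}"
    "{?P (Inr j1'), ?P (Inr j2')} = {?P (Inr j1), ?P (Inr j2)}"
    using arg_cong[OF blacks, of "image (\<lambda>i. ?P (Inl i))"] arg_cong[OF whites, of "image (\<lambda>j. ?P (Inr j))"]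
    by simp_all
  then have "?P (Inl i1') = ?P (Inl i1) \<and> ?P (Inr j1') = ?P (Inr j1) \<and>
      ?P (Inl i2') = ?P (Inl i2) \<and> ?P (Inr j2') = ?P (Inr j2)"
    by (rule interleave_unique[OF ix iy])
  then show ?thesis
    using inj_onD[OF inj] cx cy by (auto simp: kb_vertices_def)
qed

lemma blowup_crossings_le:
  assumes bal: "balanced_embedding k s pos pg" and "0 < s"
  shows "crossings (k+1) n (blowup_pos n s pos) (\<lambda>i j. pg i (j mod s)) \<le> card (same_residue_pairs s n)"
proof -
  define C where "C = crossing_pairs (k+1) n (blowup_pos n s pos) (\<lambda>i j. pg i (j mod s))"
  define h where "h x = (min (snd (fst x)) (snd (snd x)), max (snd (fst x)) (snd (snd x)))"
    for x :: "(nat \<times> nat) \<times> (nat \<times> nat)"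
  have emb: "book_embedding k (k+1) s pos pg"
    using bal by (simp add: balanced_embedding_def)
  have min_max: "{min a b, max a b} = {a, b}" for a b :: nat
    by (simp add: min_def max_def insert_commute)
  have "inj_on h C"
  proof (rule inj_onI)
    fix x y assume "x \<in> C" "y \<in> C" and "h x = h y"
    moreover obtain i1 j1 i2 j2 i1' j1' i2' j2'
      where "x = ((i1, j1), (i2, j2))" and "y = ((i1', j1'), (i2', j2'))"
      by (metis prod.collapse)
    moreover have "{j1', j2'} = {j1, j2}" if "h ((i1, j1), (i2, j2)) = h ((i1', j1'), (i2', j2'))"
      using that min_max[of j1 j2] min_max[of j1' j2'] unfolding h_def by simp
    ultimately show "x = y"
      using balanced_blowup_crossing_unique[OF bal \<open>0 < s\<close>] unfolding C_def by simp
  qed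
  moreover have "h ` C \<subseteq> same_residue_pairs s n"
  proof
    fix z assume "z \<in> h ` C"
    then obtain i1 j1 i2 j2 where x: "((i1, j1), (i2, j2)) \<in> C" and z: "z = h ((i1, j1), (i2, j2))"
      by (metis (no_types, lifting) imageE prod.collapse)
    show "z \<in> same_residue_pairs s n"
      using x[unfolded C_def mem_crossing_pairs] blowup_crossing_copies[OF emb \<open>0 < s\<close> x[unfolded C_def]]
      unfolding z h_def same_residue_pairs_def by (simp add: min_def max_def)
  qed
  moreover have "finite (same_residue_pairs s n)"
    by (rule finite_subset[of _ "{..<n} \<times> {..<n}"]) (auto simp: same_residue_pairs_def)
  ultimately show ?thesis
    unfolding crossings_eq_card_crossing_pairs C_def[symmetric] by (rule card_inj_on_le)
qed

theorem proposition18: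
  fixes k s n :: nat
  assumes "k > 0" and "s > 0"
    and "\<exists>pos pg. balanced_embedding k s pos pg"
    and "n \<ge> s"
  shows "book_cr k (k+1) n \<le>
    (n mod s) * (((n - n mod s) div s + 1) choose 2) + (s - n mod s) * (((n - n mod s) div s) choose 2)"
proof -
  obtain pos pg where bal: "balanced_embedding k s pos pg"
    using assms(3) by blast
  then have "book_drawing k (k+1) n (blowup_pos n s pos) (\<lambda>i j. pg i (j mod s))"
    using book_drawing_blowup[OF _ \<open>s > 0\<close>]
    by (simp add: balanced_embedding_def book_embedding_def)
  then have "book_cr k (k+1) n \<le> crossings (k+1) n (blowup_pos n s pos) (\<lambda>i j. pg i (j mod s))"
    unfolding book_cr_def by (blast intro: Least_le)
  also have "\<dots> \<le> card (same_residue_pairs s n)"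
    by (rule blowup_crossings_le[OF bal \<open>s > 0\<close>])
  finally show ?thesis
    unfolding card_same_residue_pairs[OF \<open>s > 0\<close>] .
qed

end
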